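(* Let $k\in\mathbb N$, $t\in(0,1)$ and $n\le 2k+2$. Then $A_{n,k,t}^{-1}$ is checkerboard: for all $i,j$, the $(i,j)$ entry of $A_{n,k,t}^{-1}$ is either $0$ or has sign $(-1)^{i-j}$. Equivalently, all minors of $A_{n,k,t}$ of order $n-1$ are nonnegative.
   Context: For $x\in\mathbb R$, $x_+=\max\{x,0\}$. For $k\in\mathbb{N}$ and $t\in(0,1)$, $A_{\infty,k,t}=(A(i,j))_{i,j\ge1}$ is the infinite Toeplitz Hessenberg matrix with $A(i,j)=a_{j-i}$ for $j\ge i$, $A(i+1,i)=1$, and $A(i,j)=0$ for $i\ge j+2$, where $(a_0,a_1,\ldots)$ is the unique sequence for which the leading principal minors satisfy $\det A(\{1,\dots,n\})=t^{(n-k-1)_+}$ for all $n\in\mathbb N$. $A_{n,k,t}$ is the leading principal $n\times n$ submatrix of $A_{\infty,k,t}$ (it is invertible since its determinant is $t^{(n-k-1)_+}>0$). *)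

theory Defs
  imports "Jordan_Normal_Form.Determinant"
begin

definition toeplitz_hess :: "(nat \<Rightarrow> real) \<Rightarrow> nat \<Rightarrow> real mat" where
  "toeplitz_hess a n = mat n n (\<lambda>(i,j). if i \<le> j then a (j - i) else if i = Suc j then 1 else 0)"

text \<open>The unique sequence whose leading principal minors are t^((n-k-1)_+) for all n >= 1
  (natural-number subtraction realises the positive part).\<close>
definition seq_akt :: "nat \<Rightarrow> real \<Rightarrow> nat \<Rightarrow> real" where
  "seq_akt k t = (THE a. \<forall>n\<ge>1. det (toeplitz_hess a n) = t ^ (n - k - 1))"

definition A_nkt :: "nat \<Rightarrow> nat \<Rightarrow> real \<Rightarrow> real mat" where
  "A_nkt n k t = toeplitz_hess (seq_akt k t) n"

end

theory Submission
  imports Defs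
begin

text \<open>Expanding the leading minors of a Toeplitz Hessenberg matrix along the first row gives
  det A(m+1) = \<Sum>j\<le>m. (-1)^j a(j) det A(m-j). This recursion determines the sequence, and for
  j \<le> 2k+1 it gives (-1)^j a(j) in closed form: 1, then k zeros, then t - 1, then (1-t)^2 t^(j-k-2).
  So for n \<le> 2k+2, conjugating A by diag((-1)^i) gives an explicit matrix C with these numbers above
  the diagonal and -1 on the subdiagonal. Its inverse can be written down entrywise: each entry is
  0 or 1 plus possibly a term t^a / t^b - 1 with a \<le> b, hence nonnegative for 0 < t \<le> 1.
  Then A^-1 = diag((-1)^i) C^-1 diag((-1)^i) has the checkerboard sign pattern.\<close>

lemma sum_lessThan_if_ge_shift:
  fixes n s :: nat
  shows "(\<Sum>l<n. if s \<le> l then g l else 0) = (\<Sum>q<n - s. g (s + q))"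
  by (induction n) (auto simp: Suc_diff_le)

lemma sum_lessThan_if_ge:
  fixes f :: "nat \<Rightarrow> 'a::ab_group_add"
  shows "(\<Sum>q<r. if s \<le> q then f q else 0) = (\<Sum>q<r. f q) - (\<Sum>q<min s r. f q)"
proof (induction r)
  case (Suc r)
  then show ?case
    by (cases "s = Suc r") (auto simp: min_def)
qed simp

definition checkerboard :: "'a::comm_ring_1 mat \<Rightarrow> 'a mat" where
  "checkerboard M = mat (dim_row M) (dim_col M) (\<lambda>(i, j). (-1)^(i + j) * M $$ (i, j))"

lemma checkerboard_dim [simp]:
  "dim_row (checkerboard M) = dim_row M" "dim_col (checkerboard M) = dim_col M"
  unfolding checkerboard_def by simp_all

lemma checkerboard_index [simp]:
  "i < dim_row M \<Longrightarrow> j < dim_col M \<Longrightarrow> checkerboard M $$ (i, j) = (-1)^(i + j) * M $$ (i, j)"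
  unfolding checkerboard_def by simp

lemma checkerboard_mult:
  assumes "dim_col M = dim_row N"
  shows "checkerboard (M * N) = checkerboard M * checkerboard N"
proof (rule eq_matI)
  fix i j assume "i < dim_row (checkerboard M * checkerboard N)" "j < dim_col (checkerboard M * checkerboard N)"
  moreover have "(-1)^(i + l) * (-1)^(l + j) = ((-1)^(i + j) :: 'a)" for l
    by (simp add: power_add mult_ac)
  ultimately show "checkerboard (M * N) $$ (i, j) = (checkerboard M * checkerboard N) $$ (i, j)"
    using assms by (auto simp: scalar_prod_def sum_distrib_left mult_ac intro!: sum.cong)
qed auto

lemma checkerboard_one [simp]: "checkerboard (1\<^sub>m n) = 1\<^sub>m n"
  by (rule eq_matI) (auto simp flip: mult_2)

lemma toeplitz_hess_carrier [simp]: "toeplitz_hess a n \<in> carrier_mat n n"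
  unfolding toeplitz_hess_def by simp

lemma toeplitz_hess_dim [simp]:
  "dim_row (toeplitz_hess a n) = n" "dim_col (toeplitz_hess a n) = n"
  unfolding toeplitz_hess_def by simp_all

lemma toeplitz_hess_index [simp]:
  "i < n \<Longrightarrow> j < n \<Longrightarrow> toeplitz_hess a n $$ (i, j) =
     (if i \<le> j then a (j - i) else if i = Suc j then 1 else 0)"
  unfolding toeplitz_hess_def by simp

lemma det_delete_first_row_toeplitz_hess:
  "j \<le> n \<Longrightarrow> det (mat_delete (toeplitz_hess a (Suc n)) 0 j) = det (toeplitz_hess a (n - j))"
proof (induction j arbitrary: n)
  case 0
  have "mat_delete (toeplitz_hess a (Suc n)) 0 0 = toeplitz_hess a n"
    by (rule eq_matI) (auto simp: mat_delete_def)
  then show ?case by simp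
next
  case (Suc j)
  then obtain n' where n: "n = Suc n'" by (cases n) auto
  define M where "M = mat_delete (toeplitz_hess a (Suc n)) 0 (Suc j)"
  have M: "M \<in> carrier_mat n n"
    unfolding M_def by (simp add: mat_delete_def)
  have first_col: "i < n \<Longrightarrow> M $$ (i, 0) = of_bool (i = 0)" for i
    unfolding M_def mat_delete_def using Suc.prems by auto
  have "det M = (\<Sum>i<n. M $$ (i, 0) * cofactor M i 0)"
    by (rule laplace_expansion_column[OF M]) (simp add: n)
  also have "\<dots> = det (mat_delete M 0 0)"
    using n by (simp add: first_col cofactor_def)
  also have "mat_delete M 0 0 = mat_delete (toeplitz_hess a (Suc n')) 0 j"
    unfolding M_def n by (rule eq_matI) (auto simp: mat_delete_def)
  finally show ?case
    using Suc n by (simp add: M_def)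
qed

lemma det_toeplitz_hess_Suc:
  "det (toeplitz_hess a (Suc n)) = (\<Sum>j\<le>n. (-1)^j * a j * det (toeplitz_hess a (n - j)))"
proof -
  have "det (toeplitz_hess a (Suc n)) =
      (\<Sum>j<Suc n. toeplitz_hess a (Suc n) $$ (0, j) * cofactor (toeplitz_hess a (Suc n)) 0 j)"
    by (rule laplace_expansion_row) auto
  then show ?thesis
    by (simp add: cofactor_def det_delete_first_row_toeplitz_hess lessThan_Suc_atMost mult_ac)
qed

lemma seq_eq_if_toeplitz_hess_dets_eq:
  assumes "\<And>r. r \<le> N \<Longrightarrow> det (toeplitz_hess a r) = det (toeplitz_hess b r)" and "j < N"
  shows "a j = b j"
  using assms(2)
proof (induction j rule: less_induct)
  case (less j)
  have "(\<Sum>i\<le>j. (-1)^i * a i * det (toeplitz_hess a (j - i))) =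
        (\<Sum>i\<le>j. (-1)^i * b i * det (toeplitz_hess b (j - i)))"
    using det_toeplitz_hess_Suc assms(1) less.prems by (metis Suc_leI)
  moreover have "(\<Sum>i<j. (-1)^i * a i * det (toeplitz_hess a (j - i))) =
                 (\<Sum>i<j. (-1)^i * b i * det (toeplitz_hess b (j - i)))"
    using less assms(1) by (intro sum.cong) auto
  ultimately have "(-1)^j * a j = (-1)^j * b j"
    by (simp add: lessThan_Suc_atMost[symmetric])
  then show ?case by simp
qed

text \<open>Solving the first-row expansion of the leading minors for the last coefficient.\<close>

fun hess_seq :: "(nat \<Rightarrow> real) \<Rightarrow> nat \<Rightarrow> real" where
  "hess_seq d m = (-1)^m * (d (Suc m) - (\<Sum>j<m. (-1)^j * hess_seq d j * d (m - j)))"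

declare hess_seq.simps [simp del]

lemma det_toeplitz_hess_seq:
  assumes "d 0 = 1"
  shows "det (toeplitz_hess (hess_seq d) n) = d n"
proof (induction n rule: less_induct)
  case (less n)
  show ?case
  proof (cases n)
    case 0
    then show ?thesis using assms by simp
  next
    case (Suc m)
    have "(-1)^m * hess_seq d m = d (Suc m) - (\<Sum>j<m. (-1)^j * hess_seq d j * d (m - j))"
      by (subst hess_seq.simps) simp
    then show ?thesis
      using less Suc assms
      by (simp add: det_toeplitz_hess_Suc lessThan_Suc_atMost[symmetric])
  qed
qed

text \<open>These are the numbers \<open>(-1)^j * a j\<close> of the paper's sequence only for \<open>j \<le> 2 * k + 1\<close>,
  which are all that matter for matrices of size at most \<open>2 * k + 2\<close>.\<close>

definition signed_coeff :: "nat \<Rightarrow> real \<Rightarrow> nat \<Rightarrow> real" where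
  "signed_coeff k t j =
     (if j = 0 then 1 else if j \<le> k then 0 else if j = Suc k then t - 1 else (1 - t)^2 * t^(j - k - 2))"

lemma sum_signed_coeff_tail:
  "(\<Sum>q<r. signed_coeff k t (Suc k + q)) = (if r = 0 then 0 else t^r - t^(r - 1))"
proof (induction r)
  case (Suc r)
  then show ?case
    by (cases r) (auto simp: signed_coeff_def power2_eq_square algebra_simps)
qed simp

lemma sum_signed_coeff_times_power:
  assumes "m \<le> 2 * k + 1"
  shows "(\<Sum>j\<le>m. signed_coeff k t j * t^(m - j - k - 1)) = t^(m - k)"
proof -
  have "(\<Sum>j\<le>m. signed_coeff k t j * t^(m - j - k - 1)) =
        (\<Sum>j<Suc m. (if j = 0 then t^(m - k - 1) else 0) + (if Suc k \<le> j then signed_coeff k t j else 0))"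
    using assms by (intro sum.cong) (auto simp: signed_coeff_def)
  also have "\<dots> = t^(m - k - 1) + (\<Sum>q<m - k. signed_coeff k t (Suc k + q))"
    by (simp only: sum.distrib sum_lessThan_if_ge_shift) simp
  also have "\<dots> = t^(m - k)"
    using sum_signed_coeff_tail[where r = "m - k"] by (cases "m - k") auto
  finally show ?thesis .
qed

lemma det_toeplitz_hess_signed_coeff:
  "r \<le> 2 * k + 2 \<Longrightarrow> det (toeplitz_hess (\<lambda>j. (-1)^j * signed_coeff k t j) r) = t^(r - k - 1)"
proof (induction r rule: less_induct)
  case (less r)
  show ?case
  proof (cases r)
    case (Suc m)
    have "det (toeplitz_hess (\<lambda>j. (-1)^j * signed_coeff k t j) r) =
          (\<Sum>j\<le>m. signed_coeff k t j * t^(m - j - k - 1))"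
      unfolding Suc det_toeplitz_hess_Suc using less Suc
      by (intro sum.cong) (auto simp flip: power_add simp: mult_2[symmetric] power_mult)
    then show ?thesis
      using sum_signed_coeff_times_power[where m = m] less.prems Suc by simp
  qed simp
qed

lemma seq_akt_eq_hess_seq: "seq_akt k t = hess_seq (\<lambda>r. t^(r - k - 1))"
  unfolding seq_akt_def
proof (rule the_equality)
  fix a assume "\<forall>n\<ge>1. det (toeplitz_hess a n) = t^(n - k - 1)"
  then have det_a: "det (toeplitz_hess a r) = t^(r - k - 1)" for r
    by (cases r) auto
  show "a = hess_seq (\<lambda>r. t^(r - k - 1))"
  proof
    fix j
    show "a j = hess_seq (\<lambda>r. t^(r - k - 1)) j"
      by (rule seq_eq_if_toeplitz_hess_dets_eq[OF _ lessI]) (simp add: det_a det_toeplitz_hess_seq)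
  qed
qed (simp add: det_toeplitz_hess_seq)

lemma seq_akt_eq_signed_coeff:
  "j \<le> 2 * k + 1 \<Longrightarrow> seq_akt k t j = (-1)^j * signed_coeff k t j"
  by (rule seq_eq_if_toeplitz_hess_dets_eq[of "2 * k + 2"])
    (simp_all add: seq_akt_eq_hess_seq det_toeplitz_hess_seq det_toeplitz_hess_signed_coeff)

definition signed_hess :: "nat \<Rightarrow> real \<Rightarrow> nat \<Rightarrow> real mat" where
  "signed_hess k t n =
     mat n n (\<lambda>(i, l). if i \<le> l then signed_coeff k t (l - i) else if i = Suc l then -1 else 0)"

lemma A_nkt_eq_checkerboard:
  assumes "n \<le> 2 * k + 2"
  shows "A_nkt n k t = checkerboard (signed_hess k t n)"
proof (rule eq_matI)
  fix i l assume "i < dim_row (checkerboard (signed_hess k t n))" "l < dim_col (checkerboard (signed_hess k t n))"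
  then have il: "i < n" "l < n"
    by (simp_all add: signed_hess_def)
  have "(-1::real)^(i + l) = (-1)^(l - i)" if "i \<le> l"
    using that by (simp add: minus_one_power_iff)
  then show "A_nkt n k t $$ (i, l) = checkerboard (signed_hess k t n) $$ (i, l)"
    using il assms by (auto simp: A_nkt_def signed_hess_def seq_akt_eq_signed_coeff)
qed (simp_all add: A_nkt_def signed_hess_def)

lemma signed_hess_row_mult:
  assumes "i < n"
  shows "(\<Sum>l<n. signed_hess k t n $$ (i, l) * x l) =
           x i - (if i = 0 then 0 else x (i - 1))
           + (\<Sum>q<n - (i + Suc k). signed_coeff k t (Suc k + q) * x (i + Suc k + q))"
proof -
  have "signed_hess k t n $$ (i, l) * x l =
          (if l = i then x l else 0) - (if i \<noteq> 0 \<and> l = i - 1 then x l else 0)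
          + (if i + Suc k \<le> l then signed_coeff k t (l - i) * x l else 0)" if "l < n" for l
    using that assms by (auto simp: signed_hess_def signed_coeff_def)
  then have "(\<Sum>l<n. signed_hess k t n $$ (i, l) * x l) =
          (\<Sum>l<n. (if l = i then x l else 0) - (if i \<noteq> 0 \<and> l = i - 1 then x l else 0)
          + (if i + Suc k \<le> l then signed_coeff k t (l - i) * x l else 0))"
    by (intro sum.cong) auto
  also have "\<dots> = x i - (if i = 0 then 0 else x (i - 1))
           + (\<Sum>q<n - (i + Suc k). signed_coeff k t (Suc k + q) * x (i + Suc k + q))"
    using assms by (simp add: sum.distrib sum_subtractf sum_lessThan_if_ge_shift add.commute add.left_commute)
  finally show ?thesis .
qed

text \<open>The first summand inverts the bidiagonal part of \<open>signed_hess\<close>. In the second, \<open>j - Suc k\<close>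
  deliberately truncates to \<open>0\<close> for \<open>j \<le> k\<close>, which makes one formula serve both column blocks.\<close>

definition inv_signed_hess_entry :: "nat \<Rightarrow> real \<Rightarrow> nat \<Rightarrow> nat \<Rightarrow> nat \<Rightarrow> real" where
  "inv_signed_hess_entry k t n i j =
     of_bool (j \<le> i) + of_bool (j - Suc k \<le> i) * (t^(j - Suc k) / t^(min (Suc i) (n - Suc k)) - 1)"

lemma inv_signed_hess_entry_diff:
  assumes "j < n" and "t \<noteq> 0"
  shows "inv_signed_hess_entry k t n i j - (if i = 0 then 0 else inv_signed_hess_entry k t n (i - 1) j) =
           of_bool (i = j) - (if j - Suc k \<le> i \<and> i < n - Suc k
                              then t^(j - Suc k) / t^i - t^(j - Suc k) / t^(Suc i) else 0)"
proof -
  define m d where "m = n - Suc k" and "d = j - Suc k"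
  have "d \<le> m"
    using assms by (auto simp: m_def d_def)
  then show ?thesis
    using assms
    by (cases i)
      (auto simp: inv_signed_hess_entry_def m_def[symmetric] d_def[symmetric] min_def le_Suc_eq not_le
        dest: le_antisym)
qed

lemma inv_signed_hess_entry_tail:
  assumes "n \<le> 2 * k + 2" and "j < n" and "t \<noteq> 0"
  shows "(\<Sum>q<n - (i + Suc k). signed_coeff k t (Suc k + q) * inv_signed_hess_entry k t n (i + Suc k + q) j) =
           (if j - Suc k \<le> i \<and> i < n - Suc k
            then t^(j - Suc k) / t^i - t^(j - Suc k) / t^(Suc i) else 0)"
proof -
  define m d where "m = n - Suc k" and "d = j - Suc k"
  let ?c = "\<lambda>q. signed_coeff k t (Suc k + q)"
  have "d \<le> m" "m \<le> Suc k"
    using assms by (auto simp: m_def d_def)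
  have "j \<le> i + Suc k + q \<longleftrightarrow> d - i \<le> q" for q
    by (auto simp: d_def)
  then have entry: "inv_signed_hess_entry k t n (i + Suc k + q) j = (if d - i \<le> q then 1 else 0) + (t^d / t^m - 1)" for q
    using \<open>d \<le> m\<close> \<open>m \<le> Suc k\<close>
    by (auto simp: inv_signed_hess_entry_def m_def[symmetric] d_def[symmetric] min_def)
  have tail: "(\<Sum>q<a - i. ?c q) = (if i < a then t^a / t^i - t^a / t^(Suc i) else 0)" for a
    using sum_signed_coeff_tail[where r = "a - i"] assms(3) by (auto simp: power_diff)
  have "n - (i + Suc k) = m - i"
    by (simp add: m_def)
  then have "(\<Sum>q<n - (i + Suc k). ?c q * inv_signed_hess_entry k t n (i + Suc k + q) j) =
        (\<Sum>q<m - i. ?c q * ((if d - i \<le> q then 1 else 0) + (t^d / t^m - 1)))"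
    by (simp only: entry)
  also have "\<dots> = (\<Sum>q<m - i. if d - i \<le> q then ?c q else 0) + (t^d / t^m - 1) * (\<Sum>q<m - i. ?c q)"
    by (auto simp: distrib_left sum.distrib sum_distrib_left mult.commute intro!: sum.cong)
  also have "\<dots> = t^d / t^m * (\<Sum>q<m - i. ?c q) - (\<Sum>q<d - i. ?c q)"
    using \<open>d \<le> m\<close> by (simp add: sum_lessThan_if_ge algebra_simps)
  also have "\<dots> = (if d \<le> i \<and> i < m then t^d / t^i - t^d / t^(Suc i) else 0)"
    unfolding tail using \<open>d \<le> m\<close> assms(3) by (auto simp: field_simps)
  finally show ?thesis
    by (simp add: m_def d_def)
qed

definition inv_signed_hess :: "nat \<Rightarrow> real \<Rightarrow> nat \<Rightarrow> real mat" where
  "inv_signed_hess k t n = mat n n (\<lambda>(i, j). inv_signed_hess_entry k t n i j)"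

lemma signed_hess_mult_inv:
  assumes "n \<le> 2 * k + 2" and "t \<noteq> 0"
  shows "signed_hess k t n * inv_signed_hess k t n = 1\<^sub>m n"
proof (rule eq_matI)
  fix i j assume "i < dim_row (1\<^sub>m n :: real mat)" "j < dim_col (1\<^sub>m n :: real mat)"
  then have ij: "i < n" "j < n"
    by simp_all
  have "(signed_hess k t n * inv_signed_hess k t n) $$ (i, j) =
        (\<Sum>l<n. signed_hess k t n $$ (i, l) * inv_signed_hess_entry k t n l j)"
    using ij by (simp add: signed_hess_def inv_signed_hess_def scalar_prod_def atLeast0LessThan)
  also have "\<dots> = of_bool (i = j)"
    unfolding signed_hess_row_mult[OF ij(1)] inv_signed_hess_entry_diff[OF ij(2) assms(2)]
      inv_signed_hess_entry_tail[OF assms(1) ij(2) assms(2)]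
    by simp
  finally show "(signed_hess k t n * inv_signed_hess k t n) $$ (i, j) = 1\<^sub>m n $$ (i, j)"
    using ij by simp
qed (simp_all add: signed_hess_def inv_signed_hess_def)

lemma inv_signed_hess_entry_nonneg:
  assumes "j < n" and "0 < t" and "t \<le> 1"
  shows "0 \<le> inv_signed_hess_entry k t n i j"
proof -
  have "1 \<le> t^(j - Suc k) / t^(min (Suc i) (n - Suc k))" if "j - Suc k \<le> i"
  proof -
    have "j - Suc k \<le> min (Suc i) (n - Suc k)"
      using that assms(1) by auto
    then have "t^(min (Suc i) (n - Suc k)) \<le> t^(j - Suc k)"
      using assms by (intro power_decreasing) auto
    then show ?thesis
      using assms by simp
  qed
  then show ?thesis
    by (auto simp: inv_signed_hess_entry_def)
qed

lemma left_inverse_A_nkt_eq: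
  assumes "n \<le> 2 * k + 2" and "t \<noteq> 0"
    and "B \<in> carrier_mat n n" and "B * A_nkt n k t = 1\<^sub>m n"
  shows "B = checkerboard (inv_signed_hess k t n)"
proof -
  have A: "A_nkt n k t \<in> carrier_mat n n"
    unfolding A_nkt_def by (rule toeplitz_hess_carrier)
  have B': "checkerboard (inv_signed_hess k t n) \<in> carrier_mat n n"
    unfolding carrier_mat_def by (simp add: inv_signed_hess_def)
  have "A_nkt n k t * checkerboard (inv_signed_hess k t n) =
        checkerboard (signed_hess k t n) * checkerboard (inv_signed_hess k t n)"
    by (simp only: A_nkt_eq_checkerboard[OF assms(1)])
  also have "\<dots> = checkerboard (signed_hess k t n * inv_signed_hess k t n)"
    by (rule checkerboard_mult[symmetric]) (simp add: signed_hess_def inv_signed_hess_def)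
  also have "\<dots> = 1\<^sub>m n"
    using assms(1,2) by (simp add: signed_hess_mult_inv)
  finally have inverse: "A_nkt n k t * checkerboard (inv_signed_hess k t n) = 1\<^sub>m n" .
  have "B = B * (A_nkt n k t * checkerboard (inv_signed_hess k t n))"
    using assms(3) by (simp add: inverse)
  also have "\<dots> = (B * A_nkt n k t) * checkerboard (inv_signed_hess k t n)"
    using assoc_mult_mat[OF assms(3) A B'] by simp
  also have "\<dots> = checkerboard (inv_signed_hess k t n)"
    using assms(4) left_mult_one_mat[OF B'] by simp
  finally show ?thesis .
qed

theorem proposition4:
  fixes k n :: nat and t :: real
  assumes "k \<ge> 1" and "n \<ge> 1" and "0 < t" and "t < 1" and "n \<le> 2 * k + 2"
  shows "\<forall>B \<in> carrier_mat n n. inverts_mat (A_nkt n k t) B \<and> inverts_mat B (A_nkt n k t) \<longrightarrow>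
           (\<forall>i<n. \<forall>j<n. B $$ (i, j) = 0 \<or> sgn (B $$ (i, j)) = (-1) ^ (i + j))"
proof (intro ballI impI allI)
  fix B i j
  assume B: "B \<in> carrier_mat n n" and "inverts_mat (A_nkt n k t) B \<and> inverts_mat B (A_nkt n k t)"
    and ij: "i < n" "j < n"
  then have "B * A_nkt n k t = 1\<^sub>m n"
    by (simp add: inverts_mat_def)
  with B assms(3,5) have "B = checkerboard (inv_signed_hess k t n)"
    by (intro left_inverse_A_nkt_eq) auto
  then have "B $$ (i, j) = (-1)^(i + j) * inv_signed_hess_entry k t n i j"
    using ij by (simp add: inv_signed_hess_def)
  moreover have "0 \<le> inv_signed_hess_entry k t n i j"
    using inv_signed_hess_entry_nonneg ij assms(3,4) by simp
  ultimately show "B $$ (i, j) = 0 \<or> sgn (B $$ (i, j)) = (-1) ^ (i + j)"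
    by (cases "inv_signed_hess_entry k t n i j = 0") (auto simp: sgn_mult)
qed

end
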